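(* Let $e_1,\dots,e_T\in\mathbb{R}^d$, $E=[e_1,\dots,e_T]$, $T_0\in\{2,\dots,T\}$, and let $C=\operatorname{conv}\{e_t:t\in\{2,\dots,T\}\setminus\{T_0\}\}$ and $\gamma=\operatorname{dist}(e_{T_0},C)$. For any attention vector $a\in\mathbb{R}^T$ with $a_1=0$, $a_t\ge0$, $\sum_t a_t=1$ (in particular for $a=a(w)$ the shifted-softmax attention of any parameter $w$), let $r=Ea-e_{T_0}$. Then there exists a constant $K>0$ (independent of $a$) such that $$(1-a_{T_0})K\ge\|r\|\ge(1-a_{T_0})\gamma.$$ In particular, if $\gamma>0$ then along any family of parameters the per-sample squared error $\frac12\|r\|^2$ tends to $0$ if and only if $a_{T_0}\to1$, and the squared loss has no finite-norm minimizer achieving zero loss.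
   Context: The shifted-softmax attention of a parameter $w$ is $a_1(w)=0$, $a_{t+1}(w)=\exp(w^\top x_t)/\sum_{s=1}^{T-1}\exp(w^\top x_s)$ for $t=1,\dots,T-1$, where $x_t$ are fixed feature vectors; such attention vectors always have $a_{T_0}<1$. *)

theory Defs
  imports "HOL-Analysis.Analysis"
begin

text \<open>Attention vectors are functions on indices 1..T (values outside are irrelevant).\<close>
definition is_attention :: "nat \<Rightarrow> (nat \<Rightarrow> real) \<Rightarrow> bool" where
  "is_attention T a \<longleftrightarrow> a 1 = 0 \<and> (\<forall>t\<in>{1..T}. a t \<ge> 0) \<and> (\<Sum>t=1..T. a t) = 1"

definition Emat :: "nat \<Rightarrow> (nat \<Rightarrow> 'a::real_vector) \<Rightarrow> (nat \<Rightarrow> real) \<Rightarrow> 'a" where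
  "Emat T e a = (\<Sum>t=1..T. a t *\<^sub>R e t)"

definition shifted_softmax :: "nat \<Rightarrow> (nat \<Rightarrow> 'p::real_inner) \<Rightarrow> 'p \<Rightarrow> nat \<Rightarrow> real" where
  "shifted_softmax T x w t =
     (if 2 \<le> t \<and> t \<le> T then exp (w \<bullet> x (t - 1)) / (\<Sum>s=1..T-1. exp (w \<bullet> x s)) else 0)"

end

theory Submission
  imports Defs
begin

text \<open>
  Since the weights of an attention vector sum to one and \<open>a\<^sub>1 = 0\<close>, the residual is
  \<open>r = \<Sum>\<^sub>t a\<^sub>t (e\<^sub>t - e\<^sub>T\<^sub>0)\<close> over \<open>t \<in> {2..T} - {T\<^sub>0}\<close>, whose weights
  sum to \<open>1 - a\<^sub>T\<^sub>0\<close>. Bounding each \<open>\<parallel>e\<^sub>t - e\<^sub>T\<^sub>0\<parallel>\<close> gives the upper bound; for the lower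
  bound, \<open>r = (1 - a\<^sub>T\<^sub>0) (c - e\<^sub>T\<^sub>0)\<close> with \<open>c\<close> the normalised convex combination, a
  point of \<open>C\<close>. Two-sided linear bounds in \<open>1 - a\<^sub>T\<^sub>0\<close> make \<open>r \<rightarrow> 0\<close> equivalent to
  \<open>a\<^sub>T\<^sub>0 \<rightarrow> 1\<close>. If \<open>\<gamma> > 0\<close> then \<open>C\<close> is nonempty, and as softmax weights are strictly
  positive, \<open>a\<^sub>T\<^sub>0 < 1\<close> for every parameter.
\<close>

lemma norm_sum_scaleR_le:
  fixes w :: "'i \<Rightarrow> 'a::real_normed_vector"
  assumes "\<And>i. i \<in> S \<Longrightarrow> 0 \<le> u i" and "\<And>i. i \<in> S \<Longrightarrow> norm (w i) \<le> K"
  shows "norm (\<Sum>i\<in>S. u i *\<^sub>R w i) \<le> (\<Sum>i\<in>S. u i) * K"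
proof -
  have "norm (\<Sum>i\<in>S. u i *\<^sub>R w i) \<le> (\<Sum>i\<in>S. u i * norm (w i))"
    using norm_sum[of "\<lambda>i. u i *\<^sub>R w i" S] assms(1) by simp
  also have "\<dots> \<le> (\<Sum>i\<in>S. u i * K)"
    using assms by (intro sum_mono mult_left_mono) auto
  finally show ?thesis
    by (simp add: sum_distrib_right)
qed

lemma infdist_convex_hull_le_norm_sum:
  fixes v :: "'i \<Rightarrow> 'a::real_normed_vector"
  assumes "finite S" and nonneg: "\<And>i. i \<in> S \<Longrightarrow> 0 \<le> u i"
  shows "(\<Sum>i\<in>S. u i) * infdist p (convex hull (v ` S)) \<le> norm (\<Sum>i\<in>S. u i *\<^sub>R (v i - p))"
proof -
  define s where "s = (\<Sum>i\<in>S. u i)"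
  have "s \<ge> 0"
    unfolding s_def using nonneg by (simp add: sum_nonneg)
  show ?thesis
  proof (cases "s = 0")
    case True
    then show ?thesis by (simp add: s_def)
  next
    case False
    with \<open>s \<ge> 0\<close> have "s > 0" by simp
    define c where "c = (\<Sum>i\<in>S. (u i / s) *\<^sub>R v i)"
    have "c \<in> convex hull (v ` S)"
      unfolding c_def using \<open>finite S\<close> \<open>s > 0\<close> nonneg
      by (intro convex_sum convex_convex_hull)
        (auto simp: s_def sum_divide_distrib[symmetric] intro: hull_inc)
    then have "infdist p (convex hull (v ` S)) \<le> dist c p"
      by (metis infdist_le dist_commute)
    also have "\<dots> = norm (\<Sum>i\<in>S. u i *\<^sub>R (v i - p)) / s"
    proof -
      have "(\<Sum>i\<in>S. u i *\<^sub>R (v i - p)) = s *\<^sub>R (c - p)"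
        using \<open>s > 0\<close>
        by (simp add: c_def s_def scaleR_sum_right scaleR_sum_left scaleR_diff_right sum_subtractf)
      then show ?thesis
        using \<open>s > 0\<close> by (simp add: dist_norm)
    qed
    finally show ?thesis
      using \<open>s > 0\<close> by (simp add: s_def field_simps)
  qed
qed

lemma is_attention_nonneg: "is_attention T a \<Longrightarrow> t \<in> {1..T} \<Longrightarrow> 0 \<le> a t"
  by (simp add: is_attention_def)

lemma is_attention_less_1:
  assumes "is_attention T a" and "t \<in> {1..T}" and "s \<in> {1..T}" "s \<noteq> t" "0 < a s"
  shows "a t < 1"
proof -
  have "a t + a s \<le> (\<Sum>r=1..T. a r)"
    using assms sum_mono2[of "{1..T}" "{t, s}" a] by (auto simp: is_attention_def)
  with assms show ?thesis
    by (simp add: is_attention_def)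
qed

lemma is_attention_residual:
  fixes e :: "nat \<Rightarrow> 'a::real_vector"
  assumes att: "is_attention T a" and T0: "T0 \<in> {2..T}"
  shows "Emat T e a - e T0 = (\<Sum>t\<in>{2..T} - {T0}. a t *\<^sub>R (e t - e T0))"
    and "(\<Sum>t\<in>{2..T} - {T0}. a t) = 1 - a T0"
proof -
  have split: "(\<Sum>t=1..T. f t) = f T0 + f 1 + (\<Sum>t\<in>{2..T} - {T0}. f t)"
    for f :: "nat \<Rightarrow> 'c::comm_monoid_add"
  proof -
    have "{1..T} = insert T0 (insert 1 ({2..T} - {T0}))"
      using T0 by auto
    then show ?thesis
      using T0 by (simp add: add.assoc)
  qed
  have sum1: "(\<Sum>t=1..T. a t) = 1" and a1: "a 1 = 0"
    using att by (simp_all add: is_attention_def)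
  show "(\<Sum>t\<in>{2..T} - {T0}. a t) = 1 - a T0"
    using split[of a] sum1 a1 by simp
  have "Emat T e a - e T0 = (\<Sum>t=1..T. a t *\<^sub>R e t) - (\<Sum>t=1..T. a t) *\<^sub>R e T0"
    unfolding Emat_def sum1 by simp
  also have "\<dots> = (\<Sum>t=1..T. a t *\<^sub>R (e t - e T0))"
    by (simp add: scaleR_sum_left sum_subtractf scaleR_diff_right)
  also have "\<dots> = (\<Sum>t\<in>{2..T} - {T0}. a t *\<^sub>R (e t - e T0))"
    using split[of "\<lambda>t. a t *\<^sub>R (e t - e T0)"] a1 by simp
  finally show "Emat T e a - e T0 = (\<Sum>t\<in>{2..T} - {T0}. a t *\<^sub>R (e t - e T0))" .
qed

lemma attention_residual_bounds:
  fixes e :: "nat \<Rightarrow> 'a::real_normed_vector"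
  assumes T0: "T0 \<in> {2..T}"
  shows "\<exists>K>0. \<forall>a. is_attention T a \<longrightarrow>
           (1 - a T0) * K \<ge> norm (Emat T e a - e T0) \<and>
           norm (Emat T e a - e T0) \<ge> (1 - a T0) * infdist (e T0) (convex hull (e ` ({2..T} - {T0})))"
proof (intro exI conjI allI impI)
  define K where "K = 1 + (\<Sum>t\<in>{2..T} - {T0}. norm (e t - e T0))"
  show "K > 0"
    unfolding K_def by (smt (verit) sum_nonneg norm_ge_zero)
  fix a
  assume att: "is_attention T a"
  have nonneg: "t \<in> {2..T} - {T0} \<Longrightarrow> 0 \<le> a t" for t
    using is_attention_nonneg[OF att] by simp
  have bound: "norm (e t - e T0) \<le> K" if "t \<in> {2..T} - {T0}" for t
    unfolding K_def using that member_le_sum[of t "{2..T} - {T0}" "\<lambda>t. norm (e t - e T0)"] by simp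
  have "norm (Emat T e a - e T0) = norm (\<Sum>t\<in>{2..T} - {T0}. a t *\<^sub>R (e t - e T0))"
    by (simp add: is_attention_residual[OF att T0])
  also have "\<dots> \<le> (\<Sum>t\<in>{2..T} - {T0}. a t) * K"
    by (rule norm_sum_scaleR_le[OF nonneg bound])
  finally show "(1 - a T0) * K \<ge> norm (Emat T e a - e T0)"
    by (simp add: is_attention_residual[OF att T0])
  show "norm (Emat T e a - e T0) \<ge> (1 - a T0) * infdist (e T0) (convex hull (e ` ({2..T} - {T0})))"
    using infdist_convex_hull_le_norm_sum[of "{2..T} - {T0}" a "e T0" e] nonneg
    by (simp add: is_attention_residual[OF att T0])
qed

lemma shifted_softmax_pos:
  assumes "t \<in> {2..T}"
  shows "0 < shifted_softmax T x w t"
proof -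
  have "0 < (\<Sum>s=1..T-1. exp (w \<bullet> x s))"
    using assms by (intro sum_pos) auto
  with assms show ?thesis
    by (simp add: shifted_softmax_def)
qed

lemma is_attention_shifted_softmax:
  assumes "2 \<le> T"
  shows "is_attention T (shifted_softmax T x w)"
proof -
  define Z where "Z = (\<Sum>s=1..T-1. exp (w \<bullet> x s))"
  have "Z > 0"
    unfolding Z_def using assms by (intro sum_pos) auto
  have "(\<Sum>t=1..T. shifted_softmax T x w t) = (\<Sum>t=2..T. exp (w \<bullet> x (t - 1)) / Z)"
    using assms by (simp add: sum.atLeast_Suc_atMost shifted_softmax_def Z_def numeral_2_eq_2)
  also have "\<dots> = (\<Sum>s=1..T-1. exp (w \<bullet> x s)) / Z"
    using sum.shift_bounds_cl_Suc_ivl[of "\<lambda>t. exp (w \<bullet> x (t - 1))" 1 "T - 1"] assms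
    by (simp add: sum_divide_distrib[symmetric] numeral_2_eq_2)
  also have "\<dots> = 1"
    using \<open>Z > 0\<close> by (simp add: Z_def)
  finally have "(\<Sum>t=1..T. shifted_softmax T x w t) = 1" .
  moreover have "0 \<le> shifted_softmax T x w t" for t
    using shifted_softmax_pos[of t T x w] by (cases "t \<in> {2..T}") (auto simp: shifted_softmax_def)
  moreover have "shifted_softmax T x w 1 = 0"
    by (simp add: shifted_softmax_def)
  ultimately show ?thesis
    by (simp add: is_attention_def)
qed

lemma tendsto_zero_iff_linear_bounds:
  fixes f g :: "'b \<Rightarrow> real"
  assumes "c > 0" and lower: "\<And>i. g i * c \<le> f i" and upper: "\<And>i. f i \<le> g i * K"
    and nonneg: "\<And>i. 0 \<le> g i"
  shows "(f \<longlongrightarrow> 0) F \<longleftrightarrow> (g \<longlongrightarrow> 0) F"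
proof
  assume "(f \<longlongrightarrow> 0) F"
  then have "((\<lambda>i. f i / c) \<longlongrightarrow> 0) F"
    by (rule tendsto_divide_zero)
  moreover have "g i \<le> f i / c" for i
    using lower[of i] \<open>c > 0\<close> by (simp add: pos_le_divide_eq)
  ultimately show "(g \<longlongrightarrow> 0) F"
    using nonneg by (intro tendsto_sandwich[of "\<lambda>_. 0" g F "\<lambda>i. f i / c"]) auto
next
  assume "(g \<longlongrightarrow> 0) F"
  then have "((\<lambda>i. g i * K) \<longlongrightarrow> 0) F"
    by (rule tendsto_mult_left_zero)
  moreover have "0 \<le> f i" for i
    using lower[of i] nonneg[of i] \<open>c > 0\<close> by (smt (verit) mult_nonneg_nonneg)
  ultimately show "(f \<longlongrightarrow> 0) F"
    using upper by (intro tendsto_sandwich[of "\<lambda>_. 0" f F "\<lambda>i. g i * K"]) auto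
qed

lemma tendsto_half_square_zero_iff_tendsto_1:
  fixes R A :: "'b \<Rightarrow> real"
  assumes "c > 0" and lower: "\<And>i. (1 - A i) * c \<le> R i" and upper: "\<And>i. R i \<le> (1 - A i) * K"
    and le_1: "\<And>i. A i \<le> 1"
  shows "((\<lambda>i. (1/2) * (R i)\<^sup>2) \<longlongrightarrow> 0) F \<longleftrightarrow> (A \<longlongrightarrow> 1) F"
proof -
  have "((\<lambda>i. (1/2) * (R i)\<^sup>2) \<longlongrightarrow> 0) F \<longleftrightarrow> (R \<longlongrightarrow> 0) F"
    using tendsto_mult_left_iff[of "1/2" "\<lambda>i. (R i)\<^sup>2" 0 F] power_tendsto_0_iff[of 2 R F] by simp
  also have "\<dots> \<longleftrightarrow> ((\<lambda>i. 1 - A i) \<longlongrightarrow> 0) F"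
    using assms by (intro tendsto_zero_iff_linear_bounds[where c = c and K = K]) auto
  also have "\<dots> \<longleftrightarrow> (A \<longlongrightarrow> 1) F"
    using Lim_null[of A 1 F] tendsto_minus_cancel_left[of "\<lambda>i. A i - 1" 0 F] by simp
  finally show ?thesis .
qed

lemma shifted_softmax_less_1:
  assumes "T0 \<in> {2..T}" and "s \<in> {2..T} - {T0}"
  shows "shifted_softmax T x w T0 < 1"
proof (rule is_attention_less_1)
  show "is_attention T (shifted_softmax T x w)"
    using assms by (intro is_attention_shifted_softmax) auto
  show "0 < shifted_softmax T x w s"
    using assms by (intro shifted_softmax_pos) auto
qed (use assms in auto)

theorem lemma4:
  fixes e :: "nat \<Rightarrow> 'a::euclidean_space" and T T0 :: nat
    and x :: "nat \<Rightarrow> 'p::real_inner"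
  assumes "2 \<le> T0" and "T0 \<le> T"
  defines "C \<equiv> convex hull (e ` ({2..T} - {T0}))"
  defines "\<gamma> \<equiv> infdist (e T0) C"
  shows "(\<exists>K>0. \<forall>a. is_attention T a \<longrightarrow>
            (1 - a T0) * K \<ge> norm (Emat T e a - e T0) \<and>
            norm (Emat T e a - e T0) \<ge> (1 - a T0) * \<gamma>)
       \<and> (\<gamma> > 0 \<longrightarrow>
            (\<forall>(F :: 'b filter) (w :: 'b \<Rightarrow> 'p).
               ((\<lambda>i. (1/2) * (norm (Emat T e (shifted_softmax T x (w i)) - e T0))\<^sup>2) \<longlongrightarrow> 0) F
               \<longleftrightarrow> ((\<lambda>i. shifted_softmax T x (w i) T0) \<longlongrightarrow> 1) F)
          \<and> (\<forall>w. (1/2) * (norm (Emat T e (shifted_softmax T x w) - e T0))\<^sup>2 > 0))"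
proof -
  have T0: "T0 \<in> {2..T}"
    using assms by simp
  obtain K where "K > 0" and bounds: "\<And>a. is_attention T a \<Longrightarrow>
      (1 - a T0) * K \<ge> norm (Emat T e a - e T0) \<and> norm (Emat T e a - e T0) \<ge> (1 - a T0) * \<gamma>"
    using attention_residual_bounds[OF T0, of e] unfolding \<gamma>_def C_def by blast
  have att: "is_attention T (shifted_softmax T x w)" for w
    using assms by (intro is_attention_shifted_softmax) simp
  have less_1: "shifted_softmax T x w T0 < 1" if "\<gamma> > 0" for w
  proof -
    from that have "C \<noteq> {}"
      unfolding \<gamma>_def infdist_def by auto
    then have "{2..T} - {T0} \<noteq> {}"
      unfolding C_def by auto
    then obtain s where "s \<in> {2..T} - {T0}"
      by blast
    with T0 show ?thesis
      by (rule shifted_softmax_less_1)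
  qed
  have "((\<lambda>i. (1/2) * (norm (Emat T e (shifted_softmax T x (w i)) - e T0))\<^sup>2) \<longlongrightarrow> 0) F
      \<longleftrightarrow> ((\<lambda>i. shifted_softmax T x (w i) T0) \<longlongrightarrow> 1) F"
    if "\<gamma> > 0" for F :: "'b filter" and w :: "'b \<Rightarrow> 'p"
    using that bounds[OF att] less_1
    by (intro tendsto_half_square_zero_iff_tendsto_1[where c = \<gamma> and K = K]) (auto simp: less_imp_le)
  moreover have "norm (Emat T e (shifted_softmax T x w) - e T0) > 0" if "\<gamma> > 0" for w
    using bounds[OF att, of w] less_1[OF that, of w] that by (smt (verit) mult_pos_pos)
  ultimately show ?thesis
    using \<open>K > 0\<close> bounds by auto
qed

end
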